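(* Let $ABC$ be a triangle and let $X, Y$ be points which are conjugate with respect to the circumcircle $\odot(ABC)$. Let $X', Y'$ be the isogonal conjugates of $X, Y$ with respect to $ABC$. Then the line $X'Y'$ passes through the center of the circumconic through $A, B, C, X', Y'$.
   Context: Two points $U, V$ are conjugate with respect to a conic $\mathcal{C}$ if the polar of $U$ with respect to $\mathcal{C}$ passes through $V$ (equivalently, the polar of $V$ passes through $U$). *)

theory Defs
  imports "HOL-Analysis.Analysis"
begin

text \<open>Points of the Euclidean plane are represented as complex numbers.\<close>

definition line :: "complex \<Rightarrow> complex \<Rightarrow> complex set" where
  "line P Q = {P + of_real t * (Q - P) | t. True}"

definition circumcircle :: "complex \<Rightarrow> complex \<Rightarrow> complex \<Rightarrow> complex \<Rightarrow> real \<Rightarrow> bool" where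
  "circumcircle A B C Oc r \<longleftrightarrow> r > 0 \<and> dist Oc A = r \<and> dist Oc B = r \<and> dist Oc C = r"

definition polar_circle :: "complex \<Rightarrow> real \<Rightarrow> complex \<Rightarrow> complex set" where
  "polar_circle Oc r U = {V. (U - Oc) \<bullet> (V - Oc) = r\<^sup>2}"

definition conjugate_wrt_circle :: "complex \<Rightarrow> real \<Rightarrow> complex \<Rightarrow> complex \<Rightarrow> bool" where
  "conjugate_wrt_circle Oc r U V \<longleftrightarrow> V \<in> polar_circle Oc r U"

definition reflect_across :: "complex \<Rightarrow> complex \<Rightarrow> complex \<Rightarrow> complex" where
  "reflect_across A u z = A + (u / cnj u) * cnj (z - A)"

definition bisector_dir :: "complex \<Rightarrow> complex \<Rightarrow> complex \<Rightarrow> complex" where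
  "bisector_dir A B C = (B - A) / of_real (cmod (B - A)) + (C - A) / of_real (cmod (C - A))"

definition isogonal_line :: "complex \<Rightarrow> complex \<Rightarrow> complex \<Rightarrow> complex \<Rightarrow> complex set" where
  "isogonal_line A B C P = reflect_across A (bisector_dir A B C) ` line A P"

definition isogonal_conjugate_of :: "complex \<Rightarrow> complex \<Rightarrow> complex \<Rightarrow> complex \<Rightarrow> complex \<Rightarrow> bool" where
  "isogonal_conjugate_of A B C P P' \<longleftrightarrow>
     P' \<in> isogonal_line A B C P \<inter> isogonal_line B C A P \<inter> isogonal_line C A B P"

definition conic_val :: "real \<Rightarrow> real \<Rightarrow> real \<Rightarrow> real \<Rightarrow> real \<Rightarrow> real \<Rightarrow> complex \<Rightarrow> real" where
  "conic_val a b c d e f z =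
     a * (Re z)\<^sup>2 + b * Re z * Im z + c * (Im z)\<^sup>2 + d * Re z + e * Im z + f"

text \<open>Nondegenerate: the symmetric matrix [[2a,b,d],[b,2c,e],[d,e,2f]] is invertible.\<close>
definition conic_nondegenerate :: "real \<Rightarrow> real \<Rightarrow> real \<Rightarrow> real \<Rightarrow> real \<Rightarrow> real \<Rightarrow> bool" where
  "conic_nondegenerate a b c d e f \<longleftrightarrow>
     2 * a*(4*c * f - e * e) - b*(2 * b * f - e * d) + d*(b * e - 2 * c * d) \<noteq> 0"

text \<open>Centre of the conic, in homogeneous coordinates (p:q:s): the pole of the line at
  infinity, i.e. M (p,q,s)^T is a multiple of (0,0,1). For a central conic this is the
  affine point (p/s, q/s) where the gradient vanishes (the centre of symmetry).\<close>
definition conic_center :: "real \<Rightarrow> real \<Rightarrow> real \<Rightarrow> real \<Rightarrow> real \<Rightarrow> real \<Rightarrow> real \<Rightarrow> real \<Rightarrow> real \<Rightarrow> bool" where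
  "conic_center a b c d e f p q s \<longleftrightarrow>
     (p, q, s) \<noteq> (0, 0, 0) \<and> 2 * a * p + b * q + d * s = 0 \<and> b * p + 2 * c * q + e * s = 0"

text \<open>The homogeneous point (p:q:s) lies on the line PQ: det [[P,1],[Q,1],[p,q,s]] = 0.\<close>
definition on_line_hom :: "complex \<Rightarrow> complex \<Rightarrow> real \<Rightarrow> real \<Rightarrow> real \<Rightarrow> bool" where
  "on_line_hom P Q p q s \<longleftrightarrow>
     Re P * (Im Q * s - q) - Im P * (Re Q * s - p) + (Re Q * q - Im Q * p) = 0"

end

theory Submission
  imports Defs
begin

text \<open>
  Work in barycentric coordinates (u : v : w) with respect to ABC and write a = BC, b = CA,
  c = AB. If (u' : v' : w') lies on the reflection in the bisector at A of the cevian through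
  (u : v : w), then b^2 w w' = c^2 v v'; so the isogonal conjugate of (x : y : z) is
  (a^2/x : b^2/y : c^2/z). Conjugacy of X and Y with respect to the circumcircle
  a^2 v w + b^2 w u + c^2 u v = 0 is the vanishing of its polar form, which in the
  coordinates (u_i : v_i : w_i) of X' and Y' becomes
  R = u1 u2 (v1 w2 + w1 v2) + v1 v2 (w1 u2 + u1 w2) + w1 w2 (u1 v2 + v1 u2) = 0.
  A conic through A, B, C has an equation f v w + g w u + h u v = 0; passing through X' and Y'
  forces (f : g : h) to be the cross product of (v_i w_i, w_i u_i, u_i v_i), i = 1, 2. For this
  conic the condition that the tangents at X' and Y' meet on the line at infinity is a
  polynomial that factors as R times a cubic. So these tangents are parallel, and parallel
  tangents at two points of a central conic make X'Y' a diameter.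
\<close>

lemma Im_cnj_mult_eq_zero_imp_collinear:
  assumes "Im (cnj (B - A) * (C - A)) = 0"
  shows "collinear {A, B, C}"
proof -
  define b c where "b = B - A" and "c = C - A"
  have real: "cnj b * c = of_real (Re (cnj b * c))"
    using assms by (simp add: complex_eq_iff b_def c_def)
  have "collinear {0, b, c}"
  proof (cases "b = 0")
    case True
    then show ?thesis by (simp add: collinear_2)
  next
    case False
    have "c = (cnj b * c) / (b * cnj b) * b"
      using False by (simp add: field_simps)
    also have "\<dots> = (Re (cnj b * c) / (cmod b)\<^sup>2) *\<^sub>R b"
      by (subst real) (simp add: scaleR_conv_of_real flip: complex_norm_square)
    finally show ?thesis
      unfolding collinear_lemma by blast
  qed
  then have "collinear {B, A, C}"
    using collinear_3[of B A C] by (simp add: b_def c_def)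
  then show ?thesis by (simp add: insert_commute)
qed

lemma affine_hull_noncollinear_complex:
  fixes A B C :: complex
  assumes "\<not> collinear {A, B, C}"
  shows "affine hull {A, B, C} = UNIV"
proof -
  have "aff_dim {A, B, C} \<le> DIM(complex)" by (rule aff_dim_le_DIM)
  with assms have "aff_dim {A, B, C} = DIM(complex)" by (simp add: collinear_aff_dim)
  then show ?thesis by (metis aff_dim_eq_full)
qed

lemma bary_coords_exist:
  fixes A B C P :: complex
  assumes "\<not> collinear {A, B, C}"
  obtains u v w where "u + v + w = 1" and "P = u *\<^sub>R A + v *\<^sub>R B + w *\<^sub>R C"
  using affine_hull_noncollinear_complex[OF assms] affine_hull_3[of A B C] by blast

lemma bary_minus_vertex:
  fixes A B C :: "'a::real_vector"
  assumes "u + v + w = 1"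
  shows "u *\<^sub>R A + v *\<^sub>R B + w *\<^sub>R C - A = v *\<^sub>R (B - A) + w *\<^sub>R (C - A)"
proof -
  have u: "u = 1 - v - w" using assms by simp
  show ?thesis unfolding u by (simp add: algebra_simps)
qed

lemma bary_in_line:
  fixes A B C :: complex
  assumes "u + v + w = 1" and "w = 0"
  shows "u *\<^sub>R A + v *\<^sub>R B + w *\<^sub>R C \<in> line A B"
proof -
  have "u *\<^sub>R A + v *\<^sub>R B + w *\<^sub>R C = A + (u *\<^sub>R A + v *\<^sub>R B + w *\<^sub>R C - A)"
    by simp
  also have "\<dots> = A + of_real v * (B - A)"
    unfolding bary_minus_vertex[OF assms(1)] using assms(2) by (simp add: scaleR_conv_of_real)
  finally show ?thesis unfolding line_def by blast
qed

lemma bary_nonzero_off_sidelines: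
  fixes A B C :: complex
  assumes off: "P \<notin> line A B \<union> line B C \<union> line C A"
    and sum: "u + v + w = 1" and P: "P = u *\<^sub>R A + v *\<^sub>R B + w *\<^sub>R C"
  shows "u \<noteq> 0" and "v \<noteq> 0" and "w \<noteq> 0"
proof -
  have PB: "P = v *\<^sub>R B + w *\<^sub>R C + u *\<^sub>R A" and PC: "P = w *\<^sub>R C + u *\<^sub>R A + v *\<^sub>R B"
    using P by (simp_all add: ac_simps)
  have "P \<in> line B C" if "u = 0"
    unfolding PB by (rule bary_in_line) (use sum that in auto)
  moreover have "P \<in> line C A" if "v = 0"
    unfolding PC by (rule bary_in_line) (use sum that in auto)
  moreover have "P \<in> line A B" if "w = 0"
    unfolding P by (rule bary_in_line) (use sum that in auto)
  ultimately show "u \<noteq> 0" and "v \<noteq> 0" and "w \<noteq> 0"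
    using off by auto
qed

lemma sgn_mult_cnj: "sgn z * cnj z = of_real (cmod z)"
  by (cases "z = 0") (simp_all add: sgn_eq power2_eq_square flip: complex_norm_square)

lemma unit_sum_div_cnj:
  fixes e1 e2 :: complex
  assumes "cmod e1 = 1" and "cmod e2 = 1" and "e1 + e2 \<noteq> 0"
  shows "(e1 + e2) / cnj (e1 + e2) = e1 * e2"
proof -
  have unit: "e1 * cnj e1 = 1" "e2 * cnj e2 = 1"
    using assms(1,2) by (simp_all flip: complex_norm_square)
  have "e1 + e2 = (e1 * cnj e1) * e2 + (e2 * cnj e2) * e1"
    by (simp only: unit) simp
  also have "\<dots> = cnj (e1 + e2) * (e1 * e2)"
    by (simp only: complex_cnj_add) algebra
  finally have "(e1 + e2) / cnj (e1 + e2) = cnj (e1 + e2) * (e1 * e2) / cnj (e1 + e2)"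
    by (rule arg_cong)
  also have "\<dots> = e1 * e2"
    using assms(3) by (intro nonzero_mult_div_cancel_left) (simp del: complex_cnj_add)
  finally show ?thesis .
qed

lemma reflect_across_bisector:
  assumes "\<not> collinear {A, B, C}"
  shows "reflect_across A (bisector_dir A B C) z = A + sgn (B - A) * sgn (C - A) * cnj (z - A)"
proof -
  have "B \<noteq> A" and "C \<noteq> A"
    using assms by (auto simp: collinear_3_eq_affine_dependent)
  then have unit: "cmod (sgn (B - A)) = 1" "cmod (sgn (C - A)) = 1"
    by (simp_all add: norm_sgn)
  have "sgn (B - A) + sgn (C - A) \<noteq> 0"
  proof
    assume "sgn (B - A) + sgn (C - A) = 0"
    then have opp: "sgn (C - A) = - sgn (B - A)"
      by (simp add: eq_neg_iff_add_eq_0 add.commute)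
    have "cnj (B - A) * (C - A) = cnj (B - A) * (of_real (cmod (C - A)) * sgn (C - A))"
      using \<open>C \<noteq> A\<close> by (simp add: sgn_eq)
    also have "\<dots> = - of_real (cmod (C - A)) * (sgn (B - A) * cnj (B - A))"
      by (simp add: opp mult_ac)
    also have "\<dots> = - of_real (cmod (C - A)) * of_real (cmod (B - A))"
      by (simp only: sgn_mult_cnj)
    finally have "Im (cnj (B - A) * (C - A)) = 0" by simp
    then show False
      using assms Im_cnj_mult_eq_zero_imp_collinear by blast
  qed
  then show ?thesis
    unfolding reflect_across_def bisector_dir_def sgn_eq[symmetric]
    using unit_sum_div_cnj[OF unit] by simp
qed

lemma isogonal_line_product_real:
  assumes "\<not> collinear {A, B, C}" and "P' \<in> isogonal_line A B C P"
  shows "Im ((P' - A) * (P - A) * cnj (B - A) * cnj (C - A)) = 0"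
proof -
  obtain t where "P' = reflect_across A (bisector_dir A B C) (A + of_real t * (P - A))"
    using assms(2) unfolding isogonal_line_def line_def by auto
  then have "P' - A = sgn (B - A) * sgn (C - A) * cnj (of_real t * (P - A))"
    by (simp only: reflect_across_bisector[OF assms(1)] add_diff_cancel_left')
  then have "(P' - A) * (P - A) * cnj (B - A) * cnj (C - A)
      = of_real t * ((P - A) * cnj (P - A)) * (sgn (B - A) * cnj (B - A)) * (sgn (C - A) * cnj (C - A))"
    by (simp only: complex_cnj_mult complex_cnj_complex_of_real mult_ac)
  also have "\<dots> = of_real (t * (cmod (P - A))\<^sup>2 * cmod (B - A) * cmod (C - A))"
    by (simp only: sgn_mult_cnj of_real_mult flip: complex_norm_square)
  finally show ?thesis by (simp only: Im_complex_of_real)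
qed

lemma Im_bary_product:
  fixes b c :: complex
  shows "Im ((v' *\<^sub>R b + w' *\<^sub>R c) * (v *\<^sub>R b + w *\<^sub>R c) * cnj b * cnj c)
    = Im (cnj b * c) * ((cmod c)\<^sup>2 * w * w' - (cmod b)\<^sup>2 * v * v')"
  unfolding cmod_power2 by (simp add: algebra_simps power2_eq_square)

lemma isogonal_line_bary:
  assumes tri: "\<not> collinear {A, B, C}" and iso: "P' \<in> isogonal_line A B C P"
    and "u + v + w = 1" and "P = u *\<^sub>R A + v *\<^sub>R B + w *\<^sub>R C"
    and "u' + v' + w' = 1" and "P' = u' *\<^sub>R A + v' *\<^sub>R B + w' *\<^sub>R C"
  shows "(dist C A)\<^sup>2 * w * w' = (dist A B)\<^sup>2 * v * v'"
proof -
  have "Im (cnj (B - A) * (C - A)) * ((cmod (C - A))\<^sup>2 * w * w' - (cmod (B - A))\<^sup>2 * v * v') = 0"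
    using isogonal_line_product_real[OF tri iso] Im_bary_product[of v' "B - A" w' "C - A" v w]
    by (simp add: assms bary_minus_vertex)
  moreover have "Im (cnj (B - A) * (C - A)) \<noteq> 0"
    using tri Im_cnj_mult_eq_zero_imp_collinear by blast
  ultimately show ?thesis by (simp add: dist_norm norm_minus_commute)
qed

lemma isogonal_conjugate_bary:
  assumes tri: "\<not> collinear {A, B, C}" and iso: "isogonal_conjugate_of A B C P P'"
    and "u + v + w = 1" and "P = u *\<^sub>R A + v *\<^sub>R B + w *\<^sub>R C"
    and "u' + v' + w' = 1" and "P' = u' *\<^sub>R A + v' *\<^sub>R B + w' *\<^sub>R C"
  shows "(dist C A)\<^sup>2 * w * w' = (dist A B)\<^sup>2 * v * v'"
    and "(dist A B)\<^sup>2 * u * u' = (dist B C)\<^sup>2 * w * w'"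
    and "(dist B C)\<^sup>2 * v * v' = (dist C A)\<^sup>2 * u * u'"
proof -
  have tri': "\<not> collinear {B, C, A}" "\<not> collinear {C, A, B}"
    using tri by (simp_all add: insert_commute)
  note lines = iso[unfolded isogonal_conjugate_of_def, simplified]
  show "(dist C A)\<^sup>2 * w * w' = (dist A B)\<^sup>2 * v * v'"
    using isogonal_line_bary[OF tri] lines assms(3-) by blast
  show "(dist A B)\<^sup>2 * u * u' = (dist B C)\<^sup>2 * w * w'"
    using isogonal_line_bary[OF tri'(1), of P' P v w u v' w' u'] lines assms(3-)
    by (simp add: ac_simps)
  show "(dist B C)\<^sup>2 * v * v' = (dist C A)\<^sup>2 * u * u'"
    using isogonal_line_bary[OF tri'(2), of P' P w u v w' u' v'] lines assms(3-)
    by (simp add: ac_simps)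
qed

lemma inner_bary_on_sphere:
  fixes A B C Oc :: "'a::real_inner"
  assumes "dist Oc A = r" and "dist Oc B = r" and "dist Oc C = r"
    and "u1 + v1 + w1 = 1" and "u2 + v2 + w2 = 1"
  shows "(u1 *\<^sub>R A + v1 *\<^sub>R B + w1 *\<^sub>R C - Oc) \<bullet> (u2 *\<^sub>R A + v2 *\<^sub>R B + w2 *\<^sub>R C - Oc)
    = r\<^sup>2 - ((dist B C)\<^sup>2 * (v1 * w2 + w1 * v2) + (dist C A)\<^sup>2 * (w1 * u2 + u1 * w2)
                + (dist A B)\<^sup>2 * (u1 * v2 + v1 * u2)) / 2"
proof -
  define a b c where "a = A - Oc" and "b = B - Oc" and "c = C - Oc"
  have shift: "u *\<^sub>R A + v *\<^sub>R B + w *\<^sub>R C - Oc = u *\<^sub>R a + v *\<^sub>R b + w *\<^sub>R c"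
    if "u + v + w = 1" for u v w
  proof -
    have u: "u = 1 - v - w" using that by simp
    show ?thesis unfolding u by (simp add: a_def b_def c_def algebra_simps)
  qed
  have "norm a = r" "norm b = r" "norm c = r"
    using assms(1-3) by (simp_all add: a_def b_def c_def dist_norm norm_minus_commute)
  then have sq: "a \<bullet> a = r\<^sup>2" "b \<bullet> b = r\<^sup>2" "c \<bullet> c = r\<^sup>2"
    by (simp_all flip: power2_norm_eq_inner)
  have "a - b = A - B" "b - c = B - C" "c - a = C - A"
    by (simp_all add: a_def b_def c_def)
  then have mixed: "a \<bullet> b = r\<^sup>2 - (dist A B)\<^sup>2 / 2" "b \<bullet> c = r\<^sup>2 - (dist B C)\<^sup>2 / 2"
      "c \<bullet> a = r\<^sup>2 - (dist C A)\<^sup>2 / 2"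
    using sq by (simp_all add: dot_norm_neg[of a b] dot_norm_neg[of b c] dot_norm_neg[of c a]
        power2_norm_eq_inner dist_norm)
  have "(u1 *\<^sub>R a + v1 *\<^sub>R b + w1 *\<^sub>R c) \<bullet> (u2 *\<^sub>R a + v2 *\<^sub>R b + w2 *\<^sub>R c)
      = u1 * u2 * (a \<bullet> a) + v1 * v2 * (b \<bullet> b) + w1 * w2 * (c \<bullet> c)
        + (u1 * v2 + v1 * u2) * (a \<bullet> b) + (v1 * w2 + w1 * v2) * (b \<bullet> c)
        + (w1 * u2 + u1 * w2) * (c \<bullet> a)"
    by (simp add: inner_add_left inner_add_right inner_commute[of b a] inner_commute[of c b]
        inner_commute[of a c] algebra_simps)
  also have "\<dots> = r\<^sup>2 * ((u1 + v1 + w1) * (u2 + v2 + w2))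
      - ((dist B C)\<^sup>2 * (v1 * w2 + w1 * v2) + (dist C A)\<^sup>2 * (w1 * u2 + u1 * w2)
         + (dist A B)\<^sup>2 * (u1 * v2 + v1 * u2)) / 2"
    unfolding sq mixed by (simp add: field_simps)
  finally show ?thesis
    unfolding shift[OF assms(4)] shift[OF assms(5)] assms(4,5) by simp
qed

lemma circle_conjugate_bary:
  fixes A B C Oc :: complex
  assumes "circumcircle A B C Oc r" and "conjugate_wrt_circle Oc r X Y"
    and "u1 + v1 + w1 = 1" and "X = u1 *\<^sub>R A + v1 *\<^sub>R B + w1 *\<^sub>R C"
    and "u2 + v2 + w2 = 1" and "Y = u2 *\<^sub>R A + v2 *\<^sub>R B + w2 *\<^sub>R C"
  shows "(dist B C)\<^sup>2 * (v1 * w2 + w1 * v2) + (dist C A)\<^sup>2 * (w1 * u2 + u1 * w2)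
      + (dist A B)\<^sup>2 * (u1 * v2 + v1 * u2) = 0"
  using assms inner_bary_on_sphere[of Oc A r B C u1 v1 w1 u2 v2 w2]
  by (simp add: circumcircle_def conjugate_wrt_circle_def polar_circle_def)

lemma isogonal_bary_nonzero:
  fixes sa sb sc u v w u' v' w' :: real
  assumes "sa \<noteq> 0" "sb \<noteq> 0" "sc \<noteq> 0" "u \<noteq> 0" "v \<noteq> 0" "w \<noteq> 0" "u' + v' + w' = 1"
    and "sb * w * w' = sc * v * v'" "sc * u * u' = sa * w * w'"
  shows "u' \<noteq> 0" and "v' \<noteq> 0" and "w' \<noteq> 0"
proof -
  have "u' = 0 \<longleftrightarrow> w' = 0" and "v' = 0 \<longleftrightarrow> w' = 0"
    using assms(1-6,8,9) by (metis mult_eq_0_iff)+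
  with assms(7) show "u' \<noteq> 0" "v' \<noteq> 0" "w' \<noteq> 0" by auto
qed

lemma isogonal_bary_conjugacy:
  fixes sa sb sc x1 y1 z1 x2 y2 z2 u1 v1 w1 u2 v2 w2 :: real
  assumes "sa \<noteq> 0" "sb \<noteq> 0" "sc \<noteq> 0" "x1 \<noteq> 0" "x2 \<noteq> 0"
    and "v1 \<noteq> 0" "w1 \<noteq> 0" "v2 \<noteq> 0" "w2 \<noteq> 0"
    and "sc * x1 * u1 = sa * z1 * w1" "sa * y1 * v1 = sb * x1 * u1"
    and "sc * x2 * u2 = sa * z2 * w2" "sa * y2 * v2 = sb * x2 * u2"
    and "sa * (y1 * z2 + z1 * y2) + sb * (z1 * x2 + x1 * z2) + sc * (x1 * y2 + y1 * x2) = 0"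
  shows "u1 * u2 * (v1 * w2 + w1 * v2) + v1 * v2 * (w1 * u2 + u1 * w2)
       + w1 * w2 * (u1 * v2 + v1 * u2) = 0"
proof -
  have y1: "y1 = x1 * u1 * sb / (sa * v1)" and z1: "z1 = x1 * u1 * sc / (sa * w1)"
    and y2: "y2 = x2 * u2 * sb / (sa * v2)" and z2: "z2 = x2 * u2 * sc / (sa * w2)"
    using assms(1,6-13) by (simp_all add: field_simps)
  have "sa * (y1 * z2 + z1 * y2) + sb * (z1 * x2 + x1 * z2) + sc * (x1 * y2 + y1 * x2)
      = x1 * x2 * sb * sc / (sa * v1 * w1 * v2 * w2)
        * (u1 * u2 * (v1 * w2 + w1 * v2) + v1 * v2 * (w1 * u2 + u1 * w2)
           + w1 * w2 * (u1 * v2 + v1 * u2))"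
    unfolding y1 z1 y2 z2 using assms(1,6-9) by (simp add: field_simps)
  with assms(1-9,14) show ?thesis by simp
qed

lemma isogonal_conjugates_of_circle_conjugates_bary:
  fixes A B C X Y X' Y' Oc :: complex
  assumes tri: "\<not> collinear {A, B, C}" and circ: "circumcircle A B C Oc r"
    and conj: "conjugate_wrt_circle Oc r X Y"
    and X_off: "X \<notin> line A B \<union> line B C \<union> line C A"
    and Y_off: "Y \<notin> line A B \<union> line B C \<union> line C A"
    and X': "isogonal_conjugate_of A B C X X'" and Y': "isogonal_conjugate_of A B C Y Y'"
    and sum1: "u1 + v1 + w1 = 1" and X'_eq: "X' = u1 *\<^sub>R A + v1 *\<^sub>R B + w1 *\<^sub>R C"
    and sum2: "u2 + v2 + w2 = 1" and Y'_eq: "Y' = u2 *\<^sub>R A + v2 *\<^sub>R B + w2 *\<^sub>R C"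
  shows "u1 \<noteq> 0" "v1 \<noteq> 0" "w1 \<noteq> 0" "u2 \<noteq> 0" "v2 \<noteq> 0" "w2 \<noteq> 0"
    and "u1 * u2 * (v1 * w2 + w1 * v2) + v1 * v2 * (w1 * u2 + u1 * w2)
       + w1 * w2 * (u1 * v2 + v1 * u2) = 0"
proof -
  obtain x1 y1 z1 where sumX: "x1 + y1 + z1 = 1" and X_eq: "X = x1 *\<^sub>R A + y1 *\<^sub>R B + z1 *\<^sub>R C"
    using bary_coords_exist[OF tri] by blast
  obtain x2 y2 z2 where sumY: "x2 + y2 + z2 = 1" and Y_eq: "Y = x2 *\<^sub>R A + y2 *\<^sub>R B + z2 *\<^sub>R C"
    using bary_coords_exist[OF tri] by blast
  have "A \<noteq> B" "B \<noteq> C" "C \<noteq> A"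
    using tri by (auto simp: collinear_3_eq_affine_dependent)
  then have sides: "(dist B C)\<^sup>2 \<noteq> 0" "(dist C A)\<^sup>2 \<noteq> 0" "(dist A B)\<^sup>2 \<noteq> 0"
    by simp_all
  note X_nz = bary_nonzero_off_sidelines[OF X_off sumX X_eq]
  note Y_nz = bary_nonzero_off_sidelines[OF Y_off sumY Y_eq]
  note isoX = isogonal_conjugate_bary[OF tri X' sumX X_eq sum1 X'_eq]
  note isoY = isogonal_conjugate_bary[OF tri Y' sumY Y_eq sum2 Y'_eq]
  show X'_nz: "u1 \<noteq> 0" "v1 \<noteq> 0" "w1 \<noteq> 0"
    using isogonal_bary_nonzero[OF sides X_nz sum1 isoX(1,2)] by auto
  show Y'_nz: "u2 \<noteq> 0" "v2 \<noteq> 0" "w2 \<noteq> 0"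
    using isogonal_bary_nonzero[OF sides Y_nz sum2 isoY(1,2)] by auto
  show "u1 * u2 * (v1 * w2 + w1 * v2) + v1 * v2 * (w1 * u2 + u1 * w2)
      + w1 * w2 * (u1 * v2 + v1 * u2) = 0"
    by (rule isogonal_bary_conjugacy[OF sides X_nz(1) Y_nz(1) X'_nz(2,3) Y'_nz(2,3)
          isoX(2,3) isoY(2,3) circle_conjugate_bary[OF circ conj sumX X_eq sumY Y_eq]])
qed

lemma conic_val_bary:
  fixes A B C :: complex
  assumes "u + v + w = 1"
  shows "conic_val a b c d e f (u *\<^sub>R A + v *\<^sub>R B + w *\<^sub>R C)
    = u * conic_val a b c d e f A + v * conic_val a b c d e f B + w * conic_val a b c d e f C
      - (conic_val a b c 0 0 0 (B - C) * v * w + conic_val a b c 0 0 0 (C - A) * w * u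
         + conic_val a b c 0 0 0 (A - B) * u * v)"
proof -
  have u: "u = 1 - v - w" using assms by simp
  show ?thesis unfolding conic_val_def u by (simp add: algebra_simps power2_eq_square)
qed

definition conic_grad :: "real \<Rightarrow> real \<Rightarrow> real \<Rightarrow> real \<Rightarrow> real \<Rightarrow> complex \<Rightarrow> complex" where
  "conic_grad a b c d e z = Complex (2 * a * Re z + b * Im z + d) (b * Re z + 2 * c * Im z + e)"

lemma conic_grad_bary:
  fixes A B C :: complex and a b c d e f u v w :: real
  assumes "u + v + w = 1"
  defines "P \<equiv> u *\<^sub>R A + v *\<^sub>R B + w *\<^sub>R C"
    and "qa \<equiv> conic_val a b c 0 0 0 (B - C)" and "qb \<equiv> conic_val a b c 0 0 0 (C - A)"
    and "qc \<equiv> conic_val a b c 0 0 0 (A - B)"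
  shows "conic_grad a b c d e P \<bullet> (B - A)
      = conic_val a b c d e f B - conic_val a b c d e f A + (qb * w + qc * v) - (qa * w + qc * u)"
    and "conic_grad a b c d e P \<bullet> (C - A)
      = conic_val a b c d e f C - conic_val a b c d e f A + (qb * w + qc * v) - (qa * v + qb * u)"
proof -
  have u: "u = 1 - v - w" using assms(1) by simp
  show "conic_grad a b c d e P \<bullet> (B - A)
      = conic_val a b c d e f B - conic_val a b c d e f A + (qb * w + qc * v) - (qa * w + qc * u)"
    unfolding P_def qa_def qb_def qc_def conic_grad_def conic_val_def inner_complex_def u
    by (simp add: algebra_simps power2_eq_square)
  show "conic_grad a b c d e P \<bullet> (C - A)
      = conic_val a b c d e f C - conic_val a b c d e f A + (qb * w + qc * v) - (qa * v + qb * u)"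
    unfolding P_def qa_def qb_def qc_def conic_grad_def conic_val_def inner_complex_def u
    by (simp add: algebra_simps power2_eq_square)
qed

lemma Im_cnj_mult_times_Im_cnj_mult:
  fixes x y b c :: complex
  shows "Im (cnj x * y) * Im (cnj b * c) = (x \<bullet> b) * (y \<bullet> c) - (x \<bullet> c) * (y \<bullet> b)"
  by (simp add: inner_complex_def algebra_simps)

lemma proportional_of_cross_eq_0:
  fixes x1 x2 x3 y1 y2 y3 :: real
  assumes "x1 * y2 = x2 * y1" and "x1 * y3 = x3 * y1" and "x2 * y3 = x3 * y2"
    and "y1 \<noteq> 0 \<or> y2 \<noteq> 0 \<or> y3 \<noteq> 0"
  obtains k where "x1 = k * y1" and "x2 = k * y2" and "x3 = k * y3"
proof -
  consider "y1 \<noteq> 0" | "y2 \<noteq> 0" | "y3 \<noteq> 0" using assms(4) by blast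
  then show thesis
  proof cases
    case 1
    then show thesis using that[of "x1 / y1"] assms(1-3) by (simp add: field_simps)
  next
    case 2
    then show thesis using that[of "x2 / y2"] assms(1-3) by (simp add: field_simps)
  next
    case 3
    then show thesis using that[of "x3 / y3"] assms(1-3) by (simp add: field_simps)
  qed
qed

text \<open>
  The determinant whose rows are the gradients (g w + h v, f w + h u, f v + g u) of
  f v w + g w u + h u v at the two points and (1, 1, 1), expanded along the last row:
  it vanishes iff the tangents at the two points are parallel.
\<close>
definition circumconic_tangent_det ::
    "real \<Rightarrow> real \<Rightarrow> real \<Rightarrow> real \<Rightarrow> real \<Rightarrow> real \<Rightarrow> real \<Rightarrow> real \<Rightarrow> real \<Rightarrow> real" where
  "circumconic_tangent_det f g h u1 v1 w1 u2 v2 w2 =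
     ((g * w1 + h * v1) - (f * w1 + h * u1)) * ((g * w2 + h * v2) - (f * v2 + g * u2))
   - ((g * w1 + h * v1) - (f * v1 + g * u1)) * ((g * w2 + h * v2) - (f * w2 + h * u2))"

lemma circumconic_tangent_det_scale:
  "circumconic_tangent_det (k * f) (k * g) (k * h) u1 v1 w1 u2 v2 w2
    = k\<^sup>2 * circumconic_tangent_det f g h u1 v1 w1 u2 v2 w2"
  unfolding circumconic_tangent_det_def by (simp add: algebra_simps power2_eq_square)

lemma circumconic_tangent_det_proportional:
  assumes "u1 * v2 = v1 * u2" and "v1 * w2 = w1 * v2" and "w1 * u2 = u1 * w2"
  shows "circumconic_tangent_det f g h u1 v1 w1 u2 v2 w2 = 0"
  using assms unfolding circumconic_tangent_det_def by algebra

text \<open>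
  Here (f, g, h) is the cross product of (v1 w1, w1 u1, u1 v1) and (v2 w2, w2 u2, u2 v2).
\<close>
lemma circumconic_tangent_det_cross:
  "circumconic_tangent_det
      (u1 * u2 * (w1 * v2 - v1 * w2)) (v1 * v2 * (u1 * w2 - w1 * u2)) (w1 * w2 * (v1 * u2 - u1 * v2))
      u1 v1 w1 u2 v2 w2
    = - (u1 * u2 * (v1 * w2 + w1 * v2) + v1 * v2 * (w1 * u2 + u1 * w2) + w1 * w2 * (u1 * v2 + v1 * u2))
      * ((u1 * v2 - v1 * u2) * (v1 * w2 - w1 * v2) * (w1 * u2 - u1 * w2))"
  unfolding circumconic_tangent_det_def by algebra

lemma circumconic_tangent_det_eq_0:
  fixes f g h u1 v1 w1 u2 v2 w2 :: real
  assumes on1: "f * v1 * w1 + g * w1 * u1 + h * u1 * v1 = 0"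
    and on2: "f * v2 * w2 + g * w2 * u2 + h * u2 * v2 = 0"
    and conj: "u1 * u2 * (v1 * w2 + w1 * v2) + v1 * v2 * (w1 * u2 + u1 * w2)
       + w1 * w2 * (u1 * v2 + v1 * u2) = 0"
    and nz: "u1 \<noteq> 0" "v1 \<noteq> 0" "w1 \<noteq> 0" "u2 \<noteq> 0" "v2 \<noteq> 0" "w2 \<noteq> 0"
  shows "circumconic_tangent_det f g h u1 v1 w1 u2 v2 w2 = 0"
proof -
  define n1 n2 n3 where "n1 = u1 * u2 * (w1 * v2 - v1 * w2)" and "n2 = v1 * v2 * (u1 * w2 - w1 * u2)"
    and "n3 = w1 * w2 * (v1 * u2 - u1 * v2)"
  show ?thesis
  proof (cases "n1 \<noteq> 0 \<or> n2 \<noteq> 0 \<or> n3 \<noteq> 0")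
    case True
    have "f * n2 = g * n1" and "f * n3 = h * n1" and "g * n3 = h * n2"
      using on1 on2 unfolding n1_def n2_def n3_def by algebra+
    then obtain k where "f = k * n1" and "g = k * n2" and "h = k * n3"
      using True by (rule proportional_of_cross_eq_0)
    then have "circumconic_tangent_det f g h u1 v1 w1 u2 v2 w2
        = k\<^sup>2 * circumconic_tangent_det n1 n2 n3 u1 v1 w1 u2 v2 w2"
      by (simp add: circumconic_tangent_det_scale)
    also have "\<dots> = 0"
      unfolding n1_def n2_def n3_def circumconic_tangent_det_cross conj by simp
    finally show ?thesis .
  next
    case False
    then have "u1 * v2 = v1 * u2" and "v1 * w2 = w1 * v2" and "w1 * u2 = u1 * w2"
      using nz by (auto simp: n1_def n2_def n3_def)
    then show ?thesis by (rule circumconic_tangent_det_proportional)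
  qed
qed

lemma circumconic_gradients_parallel:
  fixes A B C P1 P2 :: complex
  assumes tri: "\<not> collinear {A, B, C}"
    and on: "conic_val a b c d e f A = 0" "conic_val a b c d e f B = 0" "conic_val a b c d e f C = 0"
      "conic_val a b c d e f P1 = 0" "conic_val a b c d e f P2 = 0"
    and sum1: "u1 + v1 + w1 = 1" and P1: "P1 = u1 *\<^sub>R A + v1 *\<^sub>R B + w1 *\<^sub>R C"
    and sum2: "u2 + v2 + w2 = 1" and P2: "P2 = u2 *\<^sub>R A + v2 *\<^sub>R B + w2 *\<^sub>R C"
    and nz: "u1 \<noteq> 0" "v1 \<noteq> 0" "w1 \<noteq> 0" "u2 \<noteq> 0" "v2 \<noteq> 0" "w2 \<noteq> 0"
    and conj: "u1 * u2 * (v1 * w2 + w1 * v2) + v1 * v2 * (w1 * u2 + u1 * w2)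
       + w1 * w2 * (u1 * v2 + v1 * u2) = 0"
  shows "Im (cnj (conic_grad a b c d e P1) * conic_grad a b c d e P2) = 0"
proof -
  define qa qb qc where "qa = conic_val a b c 0 0 0 (B - C)" and "qb = conic_val a b c 0 0 0 (C - A)"
    and "qc = conic_val a b c 0 0 0 (A - B)"
  have "qa * v1 * w1 + qb * w1 * u1 + qc * u1 * v1 = 0"
    using conic_val_bary[OF sum1, of a b c d e f A B C] on P1 by (simp add: qa_def qb_def qc_def)
  moreover have "qa * v2 * w2 + qb * w2 * u2 + qc * u2 * v2 = 0"
    using conic_val_bary[OF sum2, of a b c d e f A B C] on P2 by (simp add: qa_def qb_def qc_def)
  ultimately have det: "circumconic_tangent_det qa qb qc u1 v1 w1 u2 v2 w2 = 0"
    using conj nz by (intro circumconic_tangent_det_eq_0)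
  have "Im (cnj (conic_grad a b c d e P1) * conic_grad a b c d e P2) * Im (cnj (B - A) * (C - A))
      = circumconic_tangent_det qa qb qc u1 v1 w1 u2 v2 w2"
    unfolding Im_cnj_mult_times_Im_cnj_mult P1 P2
      conic_grad_bary[OF sum1, where f = f] conic_grad_bary[OF sum2, where f = f]
    by (simp add: on circumconic_tangent_det_def qa_def qb_def qc_def)
  moreover have "Im (cnj (B - A) * (C - A)) \<noteq> 0"
    using tri Im_cnj_mult_eq_zero_imp_collinear by blast
  ultimately show ?thesis using det by simp
qed

lemma conic_center_on_line_of_parallel_gradients:
  assumes nondeg: "conic_nondegenerate a b c d e f" and center: "conic_center a b c d e f p q s"
    and parallel: "Im (cnj (conic_grad a b c d e P1) * conic_grad a b c d e P2) = 0"
  shows "on_line_hom P1 P2 p q s"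
proof -
  define L where "L = Re P1 * (Im P2 * s - q) - Im P1 * (Re P2 * s - p) + (Re P2 * q - Im P2 * p)"
  have E1: "2 * a * p + b * q + d * s = 0" and E2: "b * p + 2 * c * q + e * s = 0"
    using center unfolding conic_center_def by auto
  have G: "(2 * a * Re P1 + b * Im P1 + d) * (b * Re P2 + 2 * c * Im P2 + e)
      - (b * Re P1 + 2 * c * Im P1 + e) * (2 * a * Re P2 + b * Im P2 + d) = 0"
    using parallel by (simp add: conic_grad_def algebra_simps)
  txt \<open>
    L is annihilated by each cofactor of the last row of the conic matrix, and
    nondegeneracy prevents all three from vanishing.
  \<close>
  have cofactors: "b * e - 2 * c * d \<noteq> 0 \<or> d * b - 2 * a * e \<noteq> 0 \<or> 4 * a * c - b\<^sup>2 \<noteq> 0"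
  proof (rule ccontr)
    have "2 * a * (4 * c * f - e * e) - b * (2 * b * f - e * d) + d * (b * e - 2 * c * d)
        = d * (b * e - 2 * c * d) + e * (d * b - 2 * a * e) + 2 * f * (4 * a * c - b\<^sup>2)"
      by (simp add: algebra_simps power2_eq_square)
    moreover assume "\<not> ?thesis"
    ultimately show False
      using nondeg unfolding conic_nondegenerate_def by simp
  qed
  have "(b * e - 2 * c * d) * L = 0" and "(d * b - 2 * a * e) * L = 0" and "(4 * a * c - b\<^sup>2) * L = 0"
    unfolding L_def using E1 E2 G by algebra+
  with cofactors have "L = 0" by auto
  then show ?thesis unfolding on_line_hom_def L_def .
qed

theorem corollary3p2p1:
  fixes A B C X Y X' Y' Oc :: complex and r a b c d e f p q s :: real
  assumes tri: "\<not> collinear {A, B, C}"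
    and circ: "circumcircle A B C Oc r"
    and conj: "conjugate_wrt_circle Oc r X Y"
    and X_off: "X \<notin> line A B \<union> line B C \<union> line C A"
    and Y_off: "Y \<notin> line A B \<union> line B C \<union> line C A"
    and X': "isogonal_conjugate_of A B C X X'"
    and Y': "isogonal_conjugate_of A B C Y Y'"
    and nondeg: "conic_nondegenerate a b c d e f"
    and through: "\<forall>Z \<in> {A, B, C, X', Y'}. conic_val a b c d e f Z = 0"
    and center: "conic_center a b c d e f p q s"
  shows "on_line_hom X' Y' p q s"
proof -
  obtain u1 v1 w1 where sum1: "u1 + v1 + w1 = 1" and X'_eq: "X' = u1 *\<^sub>R A + v1 *\<^sub>R B + w1 *\<^sub>R C"
    using bary_coords_exist[OF tri] by blast
  obtain u2 v2 w2 where sum2: "u2 + v2 + w2 = 1" and Y'_eq: "Y' = u2 *\<^sub>R A + v2 *\<^sub>R B + w2 *\<^sub>R C"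
    using bary_coords_exist[OF tri] by blast
  note bary = isogonal_conjugates_of_circle_conjugates_bary[OF tri circ conj X_off Y_off X' Y'
      sum1 X'_eq sum2 Y'_eq]
  have "Im (cnj (conic_grad a b c d e X') * conic_grad a b c d e Y') = 0"
    using through by (intro circumconic_gradients_parallel[OF tri _ _ _ _ _ sum1 X'_eq sum2 Y'_eq bary]) auto
  then show ?thesis
    by (rule conic_center_on_line_of_parallel_gradients[OF nondeg center])
qed

end
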